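(* Let an independent instance with $k$ signals ($2\le k\le n$) be $\rho_E$-optimal and let $\varphi^*$ be an optimal scheme with $k$ signals. Then ActionsGreedy computes a set $S\subseteq[n-1]$ of $k-1$ actions with \[f(S)\ge\Big(1-\big(1-\tfrac1k\big)^{k-1}\Big)u_{\mathcal S}(\varphi^* ).\]
   Context: Bayesian persuasion: receiver chooses one of actions $[n]$; the sender sends one of $k$ signals according to a committed scheme; receiver best-responds (ties in favor of sender); optimal = maximizes sender expected utility $u_{\mathcal S}$ among schemes with $k$ signals. Independent instance: action $i$ has independent type over $j\in[m]$ with probability $q_{ij}$, receiver value $\rho_{ij}$, sender value $\xi_{ij}$. $\rho_E=\max_i\sum_jq_{ij}\rho_{ij}$; actions numbered so $\sum_jq_{nj}\rho_{nj}=\rho_E$ and action $n$ maximizes $\sum_jq_{ij}\xi_{ij}$ among actions with $\sum_jq_{ij}\rho_{ij}=\rho_E$. $\rho_E$-optimal: some optimal scheme with $k$ signals gives the receiver conditional expected utility at least $\rho_E$ for every signal sent with positive probability. $g_i(z)=\max\{\sum_jx_{ij}\xi_{ij}:\sum_jx_{ij}\le z,\ \sum_jx_{ij}\rho_{ij}\ge\rho_E\sum_jx_{ij},\ 0\le x_{ij}\le q_{ij}\}$; $f(S)=\max\{\sum_{i\in S\cup\{n\}}g_i(z_i):\sum_{i\in S\cup\{n\}}z_i\le1,z_i\ge0\}$. ActionsGreedy: start with $S=\emptyset$ and, $k-1$ times, add an action $i\in[n-1]\setminus S$ maximizing $f(S\cup\{i\})-f(S)$. *)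

theory Defs
  imports Complex_Main "HOL-Library.FuncSet"
begin

text \<open>Independent Bayesian persuasion instance: actions 1..n, types 1..m,
  q i j = probability that action i has type j, rho i j receiver value,
  xi i j sender value.\<close>

definition states :: "nat \<Rightarrow> nat \<Rightarrow> (nat \<Rightarrow> nat) set" where
  "states n m = PiE {1..n} (\<lambda>_. {1..m})"

definition prior :: "nat \<Rightarrow> (nat \<Rightarrow> nat \<Rightarrow> real) \<Rightarrow> (nat \<Rightarrow> nat) \<Rightarrow> real" where
  "prior n q \<theta> = (\<Prod>i\<in>{1..n}. q i (\<theta> i))"

definition is_scheme :: "nat \<Rightarrow> nat \<Rightarrow> nat \<Rightarrow> ((nat \<Rightarrow> nat) \<Rightarrow> nat \<Rightarrow> real) \<Rightarrow> bool" where
  "is_scheme n m k \<phi> =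
     (\<forall>\<theta>\<in>states n m. (\<forall>s\<in>{1..k}. 0 \<le> \<phi> \<theta> s) \<and> (\<Sum>s=1..k. \<phi> \<theta> s) = 1)"

definition sig_prob :: "nat \<Rightarrow> nat \<Rightarrow> (nat \<Rightarrow> nat \<Rightarrow> real) \<Rightarrow> ((nat \<Rightarrow> nat) \<Rightarrow> nat \<Rightarrow> real) \<Rightarrow> nat \<Rightarrow> real" where
  "sig_prob n m q \<phi> s = (\<Sum>\<theta>\<in>states n m. prior n q \<theta> * \<phi> \<theta> s)"

text \<open>Joint (unnormalized) expected utilities: E[u(a) ; signal s].\<close>
definition joint_val :: "nat \<Rightarrow> nat \<Rightarrow> (nat \<Rightarrow> nat \<Rightarrow> real) \<Rightarrow> (nat \<Rightarrow> nat \<Rightarrow> real)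
    \<Rightarrow> ((nat \<Rightarrow> nat) \<Rightarrow> nat \<Rightarrow> real) \<Rightarrow> nat \<Rightarrow> nat \<Rightarrow> real" where
  "joint_val n m q u \<phi> s a = (\<Sum>\<theta>\<in>states n m. prior n q \<theta> * \<phi> \<theta> s * u a (\<theta> a))"

definition best_responses :: "nat \<Rightarrow> nat \<Rightarrow> (nat \<Rightarrow> nat \<Rightarrow> real) \<Rightarrow> (nat \<Rightarrow> nat \<Rightarrow> real)
    \<Rightarrow> ((nat \<Rightarrow> nat) \<Rightarrow> nat \<Rightarrow> real) \<Rightarrow> nat \<Rightarrow> nat set" where
  "best_responses n m q rho \<phi> s =
     {a\<in>{1..n}. \<forall>b\<in>{1..n}. joint_val n m q rho \<phi> s b \<le> joint_val n m q rho \<phi> s a}"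

definition sender_util :: "nat \<Rightarrow> nat \<Rightarrow> nat \<Rightarrow> (nat \<Rightarrow> nat \<Rightarrow> real) \<Rightarrow> (nat \<Rightarrow> nat \<Rightarrow> real)
    \<Rightarrow> (nat \<Rightarrow> nat \<Rightarrow> real) \<Rightarrow> ((nat \<Rightarrow> nat) \<Rightarrow> nat \<Rightarrow> real) \<Rightarrow> real" where
  "sender_util n m k q rho xi \<phi> =
     (\<Sum>s=1..k. Max (joint_val n m q xi \<phi> s ` best_responses n m q rho \<phi> s))"

definition optimal_scheme :: "nat \<Rightarrow> nat \<Rightarrow> nat \<Rightarrow> (nat \<Rightarrow> nat \<Rightarrow> real) \<Rightarrow> (nat \<Rightarrow> nat \<Rightarrow> real)
    \<Rightarrow> (nat \<Rightarrow> nat \<Rightarrow> real) \<Rightarrow> ((nat \<Rightarrow> nat) \<Rightarrow> nat \<Rightarrow> real) \<Rightarrow> bool" where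
  "optimal_scheme n m k q rho xi \<phi> =
     (is_scheme n m k \<phi> \<and>
      (\<forall>\<psi>. is_scheme n m k \<psi> \<longrightarrow> sender_util n m k q rho xi \<psi> \<le> sender_util n m k q rho xi \<phi>))"

definition rhoE :: "nat \<Rightarrow> nat \<Rightarrow> (nat \<Rightarrow> nat \<Rightarrow> real) \<Rightarrow> (nat \<Rightarrow> nat \<Rightarrow> real) \<Rightarrow> real" where
  "rhoE n m q rho = Max ((\<lambda>i. \<Sum>j=1..m. q i j * rho i j) ` {1..n})"

definition receiver_cond_util :: "nat \<Rightarrow> nat \<Rightarrow> (nat \<Rightarrow> nat \<Rightarrow> real) \<Rightarrow> (nat \<Rightarrow> nat \<Rightarrow> real)
    \<Rightarrow> ((nat \<Rightarrow> nat) \<Rightarrow> nat \<Rightarrow> real) \<Rightarrow> nat \<Rightarrow> real" where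
  "receiver_cond_util n m q rho \<phi> s =
     Max (joint_val n m q rho \<phi> s ` {1..n}) / sig_prob n m q \<phi> s"

definition rhoE_optimal :: "nat \<Rightarrow> nat \<Rightarrow> nat \<Rightarrow> (nat \<Rightarrow> nat \<Rightarrow> real) \<Rightarrow> (nat \<Rightarrow> nat \<Rightarrow> real)
    \<Rightarrow> (nat \<Rightarrow> nat \<Rightarrow> real) \<Rightarrow> bool" where
  "rhoE_optimal n m k q rho xi =
     (\<exists>\<phi>. optimal_scheme n m k q rho xi \<phi> \<and>
        (\<forall>s\<in>{1..k}. sig_prob n m q \<phi> s > 0 \<longrightarrow>
            receiver_cond_util n m q rho \<phi> s \<ge> rhoE n m q rho))"

text \<open>g_i(z): the maximum is attained, so it is rendered as the supremum.\<close>
definition gfun :: "nat \<Rightarrow> nat \<Rightarrow> (nat \<Rightarrow> nat \<Rightarrow> real) \<Rightarrow> (nat \<Rightarrow> nat \<Rightarrow> real)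
    \<Rightarrow> (nat \<Rightarrow> nat \<Rightarrow> real) \<Rightarrow> nat \<Rightarrow> real \<Rightarrow> real" where
  "gfun n m q rho xi i z = Sup {(\<Sum>j=1..m. x j * xi i j) | x.
      (\<forall>j\<in>{1..m}. 0 \<le> x j \<and> x j \<le> q i j) \<and>
      (\<Sum>j=1..m. x j) \<le> z \<and>
      (\<Sum>j=1..m. x j * rho i j) \<ge> rhoE n m q rho * (\<Sum>j=1..m. x j)}"

definition ffun :: "nat \<Rightarrow> nat \<Rightarrow> (nat \<Rightarrow> nat \<Rightarrow> real) \<Rightarrow> (nat \<Rightarrow> nat \<Rightarrow> real)
    \<Rightarrow> (nat \<Rightarrow> nat \<Rightarrow> real) \<Rightarrow> nat set \<Rightarrow> real" where
  "ffun n m q rho xi S = Sup {(\<Sum>i\<in>insert n S. gfun n m q rho xi i (z i)) | z.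
      (\<forall>i\<in>insert n S. 0 \<le> z i) \<and> (\<Sum>i\<in>insert n S. z i) \<le> 1}"

text \<open>A run of ActionsGreedy (any tie-breaking): the list of actions added in order.\<close>
definition greedy_run :: "nat \<Rightarrow> nat \<Rightarrow> nat \<Rightarrow> (nat \<Rightarrow> nat \<Rightarrow> real) \<Rightarrow> (nat \<Rightarrow> nat \<Rightarrow> real)
    \<Rightarrow> (nat \<Rightarrow> nat \<Rightarrow> real) \<Rightarrow> nat list \<Rightarrow> bool" where
  "greedy_run n m k q rho xi xs =
     (length xs = k - 1 \<and>
      (\<forall>t < k - 1.
         xs ! t \<in> {1..n-1} - set (take t xs) \<and>
         (\<forall>i\<in>{1..n-1} - set (take t xs).
            ffun n m q rho xi (insert i (set (take t xs))) - ffun n m q rho xi (set (take t xs))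
            \<le> ffun n m q rho xi (insert (xs ! t) (set (take t xs))) - ffun n m q rho xi (set (take t xs)))))"

end

theory Submission
  imports Defs "HOL-Analysis.Convex"
begin

text \<open>
  Take an optimal scheme all of whose signals leave the receiver at least \<open>\<rho>\<^sub>E\<close>, and let the
  receiver break ties for the sender. Pooling the signals that recommend action \<open>b\<close> yields a part
  of the type distribution of \<open>b\<close>, of some mass \<open>z\<^sub>b\<close>, on which \<open>b\<close> is still obedient
  (receiver value at least \<open>\<rho>\<^sub>E\<close>), so its sender value is at most \<open>g\<^sub>b(z\<^sub>b)\<close>. The masses sum
  to one over at most \<open>k\<close> actions, hence \<open>u\<^sub>S(\<phi>\<^sup>*) \<le> f(T)\<close> for some \<open>T\<close> with \<open>|T| \<le> k\<close>.

  Each \<open>g\<^sub>i\<close> is concave (a convex combination of feasible points is feasible), and this makes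
  \<open>f\<close>, the best split of a unit budget among the \<open>g\<^sub>i\<close>, monotone and submodular. The bound of
  Nemhauser, Wolsey and Fisher for greedy maximisation of such functions then gives
  \<open>f(S) \<ge> (1 - (1 - 1/k)^(k-1)) f(T)\<close>.
\<close>

section \<open>Submodular set functions and the greedy algorithm\<close>

definition submodular_on :: "'a set \<Rightarrow> ('a set \<Rightarrow> real) \<Rightarrow> bool" where
  "submodular_on U F \<longleftrightarrow> (\<forall>S\<subseteq>U. \<forall>a\<in>U - S. \<forall>b\<in>U - S. a \<noteq> b \<longrightarrow>
     F (insert a (insert b S)) + F S \<le> F (insert a S) + F (insert b S))"

lemma submodular_on_insert_shift:
  assumes "submodular_on U F" "c \<in> U"
  shows "submodular_on (U - {c}) (\<lambda>S. F (insert c S))"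
  unfolding submodular_on_def
proof (intro allI ballI impI)
  fix S a b assume "S \<subseteq> U - {c}" "a \<in> U - {c} - S" "b \<in> U - {c} - S" "a \<noteq> b"
  then have "F (insert a (insert b (insert c S))) + F (insert c S)
      \<le> F (insert a (insert c S)) + F (insert b (insert c S))"
    using assms by (intro assms(1)[unfolded submodular_on_def, rule_format]) auto
  then show "F (insert c (insert a (insert b S))) + F (insert c S)
      \<le> F (insert c (insert a S)) + F (insert c (insert b S))"
    by (simp add: insert_commute)
qed

lemma mono_on_insert_shift:
  assumes "mono_on (Pow U) F" "c \<in> U"
  shows "mono_on (Pow (U - {c})) (\<lambda>S. F (insert c S))"
  by (rule mono_onI) (use assms in \<open>auto intro!: mono_onD[OF assms(1)]\<close>)

lemma submodular_on_diminishing_returns: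
  assumes F: "submodular_on U F" and U: "finite U"
    and ST: "S \<subseteq> T" "T \<subseteq> U" and x: "x \<in> U - T"
  shows "F (insert x T) - F T \<le> F (insert x S) - F S"
proof -
  have "F (insert x (S \<union> D)) - F (S \<union> D) \<le> F (insert x S) - F S"
    if "finite D" "S \<union> D \<subseteq> U" "x \<in> U - (S \<union> D)" for D
    using that
  proof (induction D rule: finite_induct)
    case (insert d D)
    show ?case
    proof (cases "d \<in> S")
      case False
      then have "F (insert x (insert d (S \<union> D))) + F (S \<union> D)
          \<le> F (insert x (S \<union> D)) + F (insert d (S \<union> D))"
        using insert by (intro F[unfolded submodular_on_def, rule_format]) auto
      with insert show ?thesis by simp
    qed (use insert in \<open>simp add: insert_absorb\<close>)
  qed simp
  from this[of "T - S"] show ?thesis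
    using ST x U by (simp add: Un_absorb1 finite_subset)
qed

lemma submodular_on_gain_sum:
  assumes F: "submodular_on U F" and U: "finite U" and "S \<subseteq> U" "D \<subseteq> U"
  shows "F (S \<union> D) - F S \<le> (\<Sum>d\<in>D - S. F (insert d S) - F S)"
proof -
  have "finite D" using U \<open>D \<subseteq> U\<close> by (rule finite_subset[rotated])
  then show ?thesis using \<open>D \<subseteq> U\<close>
  proof (induction D rule: finite_induct)
    case (insert d D)
    show ?case
    proof (cases "d \<in> S \<union> D")
      case True
      then have "S \<union> insert d D = S \<union> D" "insert d D - S = D - S"
        using insert.hyps(2) by auto
      with insert show ?thesis by simp
    next
      case False
      have "F (insert d (S \<union> D)) - F (S \<union> D) \<le> F (insert d S) - F S"
        using insert False assms by (intro submodular_on_diminishing_returns[OF F U]) auto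
      with insert False show ?thesis by (simp add: insert_Diff_if)
    qed
  qed simp
qed

definition greedy_choice :: "'a set \<Rightarrow> ('a set \<Rightarrow> real) \<Rightarrow> 'a set \<Rightarrow> 'a \<Rightarrow> bool" where
  "greedy_choice U F S x \<longleftrightarrow>
     x \<in> U - S \<and> (\<forall>i\<in>U - S. F (insert i S) - F S \<le> F (insert x S) - F S)"

definition greedy_sequence :: "'a set \<Rightarrow> ('a set \<Rightarrow> real) \<Rightarrow> 'a list \<Rightarrow> bool" where
  "greedy_sequence U F xs \<longleftrightarrow> (\<forall>t < length xs. greedy_choice U F (set (take t xs)) (xs ! t))"

lemma greedy_sequence_Nil [simp]: "greedy_sequence U F []"
  by (simp add: greedy_sequence_def)

lemma greedy_sequence_snoc [simp]:
  "greedy_sequence U F (xs @ [x]) \<longleftrightarrow> greedy_sequence U F xs \<and> greedy_choice U F (set xs) x"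
  by (auto simp: greedy_sequence_def nth_append less_Suc_eq)

lemma greedy_choice_exists:
  assumes "finite U" "\<not> U \<subseteq> S"
  shows "\<exists>x. greedy_choice U F S x"
proof -
  let ?gain = "\<lambda>i. F (insert i S) - F S"
  have "finite (U - S)" "U - S \<noteq> {}" using assms by auto
  then have "Max (?gain ` (U - S)) \<in> ?gain ` (U - S)"
    by (intro Max_in) auto
  then obtain x where x: "x \<in> U - S" "?gain x = Max (?gain ` (U - S))"
    by auto
  have "\<forall>i\<in>U - S. ?gain i \<le> ?gain x"
    using \<open>finite (U - S)\<close> x(2) by simp
  with x(1) show ?thesis
    unfolding greedy_choice_def by blast
qed

lemma greedy_sequence_exists:
  assumes "finite U" "N \<le> card U"
  shows "\<exists>xs. length xs = N \<and> greedy_sequence U F xs"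
  using assms(2)
proof (induction N)
  case (Suc N)
  then obtain xs where xs: "length xs = N" "greedy_sequence U F xs" by auto
  have "card (set xs) < card U"
    using Suc.prems card_length[of xs] xs(1) by linarith
  then have "\<not> U \<subseteq> set xs"
    using card_mono[of "set xs" U] by auto
  then obtain x where "greedy_choice U F (set xs) x"
    using greedy_choice_exists[OF assms(1)] by blast
  with xs show ?case
    by (intro exI[of _ "xs @ [x]"]) simp
qed simp

lemma greedy_sequence_distinct:
  assumes "greedy_sequence U F xs"
  shows "distinct xs" "set xs \<subseteq> U"
  using assms by (induction xs rule: rev_induct) (auto simp: greedy_choice_def)

lemma greedy_choice_closes_gap:
  assumes U: "finite U" and F: "mono_on (Pow U) F" "submodular_on U F"
    and S: "S \<subseteq> U" and x: "greedy_choice U F S x"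
    and Opt: "Opt \<subseteq> U" "card Opt \<le> k" and k: "0 < k"
  shows "F Opt - F (insert x S) \<le> (1 - 1 / real k) * (F Opt - F S)"
proof -
  define \<delta> where "\<delta> = F (insert x S) - F S"
  have "x \<in> U" using x by (simp add: greedy_choice_def)
  then have \<delta>_nonneg: "0 \<le> \<delta>"
    using S by (auto simp: \<delta>_def intro!: mono_onD[OF F(1)])
  have "F Opt \<le> F (S \<union> Opt)"
    using S Opt by (intro mono_onD[OF F(1)]) auto
  also have "\<dots> \<le> F S + (\<Sum>d\<in>Opt - S. F (insert d S) - F S)"
    using submodular_on_gain_sum[OF F(2) U S Opt(1)] by simp
  also have "(\<Sum>d\<in>Opt - S. F (insert d S) - F S) \<le> (\<Sum>d\<in>Opt - S. \<delta>)"
    using x Opt(1) by (intro sum_mono) (auto simp: greedy_choice_def \<delta>_def)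
  also have "\<dots> \<le> k * \<delta>"
  proof -
    have "card (Opt - S) \<le> card Opt"
      using Opt U by (intro card_mono) (auto intro: finite_subset)
    then have "card (Opt - S) \<le> k" using Opt(2) by simp
    then show ?thesis using \<delta>_nonneg by (simp add: mult_right_mono)
  qed
  finally have "(F Opt - F S) / k \<le> \<delta>"
    using k by (simp add: divide_le_eq mult.commute)
  then show ?thesis
    by (simp add: \<delta>_def algebra_simps diff_divide_distrib)
qed

theorem greedy_sequence_approximation:
  assumes U: "finite U" and F: "mono_on (Pow U) F" "submodular_on U F" "0 \<le> F {}"
    and xs: "greedy_sequence U F xs"
    and Opt: "Opt \<subseteq> U" "card Opt \<le> k" and k: "0 < k"
  shows "(1 - (1 - 1 / real k) ^ length xs) * F Opt \<le> F (set xs)"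
proof -
  define c where "c = 1 - 1 / real k"
  have "0 \<le> c" using k by (simp add: c_def)
  have "F Opt - F (set xs) \<le> c ^ length xs * (F Opt - F {})"
    using xs
  proof (induction xs rule: rev_induct)
    case (snoc x xs)
    have "F Opt - F (insert x (set xs)) \<le> c * (F Opt - F (set xs))"
      unfolding c_def using snoc.prems greedy_sequence_distinct[OF snoc.prems]
      by (intro greedy_choice_closes_gap[OF U F(1,2) _ _ Opt k]) auto
    also have "\<dots> \<le> c * (c ^ length xs * (F Opt - F {}))"
      using snoc \<open>0 \<le> c\<close> by (intro mult_left_mono) auto
    finally show ?case by simp
  qed simp
  moreover have "0 \<le> c ^ length xs * F {}"
    using \<open>0 \<le> c\<close> F(3) by simp
  ultimately show ?thesis
    by (simp add: c_def algebra_simps)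
qed

section \<open>Splitting a unit budget among concave functions\<close>

lemma mult_cSup_le:
  fixes X :: "real set"
  assumes "X \<noteq> {}" "0 \<le> a" "\<And>x. x \<in> X \<Longrightarrow> a * x \<le> d"
  shows "a * Sup X \<le> d"
proof (cases "a = 0")
  case True
  with assms show ?thesis by force
next
  case False
  with assms have "Sup X \<le> d / a"
    by (intro cSup_least) (auto simp: field_simps)
  with False assms(2) show ?thesis by (simp add: field_simps)
qed

lemma cSup_lincomb_le:
  fixes X Y :: "real set"
  assumes "X \<noteq> {}" "Y \<noteq> {}" "0 \<le> a" "0 \<le> b"
    and "\<And>x y. x \<in> X \<Longrightarrow> y \<in> Y \<Longrightarrow> a * x + b * y \<le> c"
  shows "a * Sup X + b * Sup Y \<le> c"
proof -
  have "a * Sup X \<le> c - b * y" if "y \<in> Y" for y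
    using assms that by (intro mult_cSup_le) (auto simp: le_diff_eq)
  then have "b * Sup Y \<le> c - a * Sup X"
    using assms by (intro mult_cSup_le) (auto simp: le_diff_eq add.commute)
  then show ?thesis by simp
qed

lemma sum_insert_fun_upd:
  assumes "finite A" "a \<notin> A"
  shows "(\<Sum>i\<in>insert a A. h i ((f(a := v)) i)) = h a v + (\<Sum>i\<in>A. h i (f i))"
proof -
  have "(\<Sum>i\<in>A. h i ((f(a := v)) i)) = (\<Sum>i\<in>A. h i (f i))"
    using assms(2) by (intro sum.cong) auto
  with assms show ?thesis by simp
qed

definition budget_splits :: "'a set \<Rightarrow> ('a \<Rightarrow> real) set" where
  "budget_splits A = {z. (\<forall>i\<in>A. 0 \<le> z i) \<and> (\<Sum>i\<in>A. z i) \<le> 1}"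

definition split_value :: "('a \<Rightarrow> real \<Rightarrow> real) \<Rightarrow> 'a set \<Rightarrow> real" where
  "split_value G A = (SUP z\<in>budget_splits A. \<Sum>i\<in>A. G i (z i))"

lemma zero_in_budget_splits: "(\<lambda>_. 0) \<in> budget_splits A"
  by (simp add: budget_splits_def)

lemma split_value_least:
  assumes "\<And>z. z \<in> budget_splits A \<Longrightarrow> (\<Sum>i\<in>A. G i (z i)) \<le> c"
  shows "split_value G A \<le> c"
  unfolding split_value_def using assms zero_in_budget_splits
  by (intro cSUP_least) auto

locale concave_family =
  fixes I :: "'a set" and G :: "'a \<Rightarrow> real \<Rightarrow> real"
  assumes concave: "i \<in> I \<Longrightarrow> concave_on {0..} (G i)"
    and nonneg: "i \<in> I \<Longrightarrow> 0 \<le> z \<Longrightarrow> 0 \<le> G i z"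
    and bounded: "i \<in> I \<Longrightarrow> bdd_above (G i ` {0..})"
begin

lemma split_value_upper:
  assumes "A \<subseteq> I" "z \<in> budget_splits A"
  shows "(\<Sum>i\<in>A. G i (z i)) \<le> split_value G A"
proof -
  have "(\<Sum>i\<in>A. G i (z i)) \<le> (\<Sum>i\<in>A. Sup (G i ` {0..}))" if "z \<in> budget_splits A" for z
    using that assms(1) bounded by (intro sum_mono cSup_upper) (auto simp: budget_splits_def)
  then show ?thesis
    unfolding split_value_def using assms(2) by (intro cSUP_upper bdd_aboveI2) auto
qed

lemma split_value_nonneg:
  assumes "A \<subseteq> I"
  shows "0 \<le> split_value G A"
proof -
  have "0 \<le> (\<Sum>i\<in>A. G i ((\<lambda>_. 0) i))"
    using assms nonneg by (intro sum_nonneg) auto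
  also have "\<dots> \<le> split_value G A"
    using assms zero_in_budget_splits by (rule split_value_upper)
  finally show ?thesis .
qed

lemma split_value_mono:
  assumes "finite I"
  shows "mono_on (Pow I) (split_value G)"
proof (rule mono_onI)
  fix A B assume AB: "A \<in> Pow I" "B \<in> Pow I" "A \<le> B"
  have "finite B" using AB assms by (auto intro: finite_subset)
  show "split_value G A \<le> split_value G B"
  proof (rule split_value_least)
    fix z assume z: "z \<in> budget_splits A"
    define z' where "z' i = (if i \<in> A then z i else 0)" for i
    have "(\<Sum>i\<in>B. z' i) = (\<Sum>i\<in>A. z i)"
      using AB \<open>finite B\<close> by (simp add: z'_def sum.If_cases Int_absorb1)
    then have "z' \<in> budget_splits B"
      using z by (auto simp: budget_splits_def z'_def)
    have "(\<Sum>i\<in>A. G i (z i)) \<le> (\<Sum>i\<in>A. G i (z' i)) + (\<Sum>i\<in>B - A. G i (z' i))"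
      using AB nonneg by (auto simp: z'_def intro!: sum_nonneg)
    also have "\<dots> = (\<Sum>i\<in>B. G i (z' i))"
      using AB \<open>finite B\<close> by (simp add: sum.subset_diff[of A B])
    also have "\<dots> \<le> split_value G B"
      using AB \<open>z' \<in> budget_splits B\<close> by (intro split_value_upper) auto
    finally show "(\<Sum>i\<in>A. G i (z i)) \<le> split_value G B" .
  qed
qed

lemma two_point_exchange:
  assumes "i \<in> I" "0 \<le> x" "0 \<le> y" "0 \<le> l" "l \<le> 1"
  shows "G i x + G i y \<le> G i (l * x + (1 - l) * y) + G i ((1 - l) * x + l * y)"
proof -
  have "(1 - t) * G i y + t * G i x \<le> G i ((1 - t) * y + t * x)" if "0 \<le> t" "t \<le> 1" for t
    using concave_onD[OF concave[OF assms(1)], of t y x] that assms(2,3) by simp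
  from this[of l] this[of "1 - l"] assms(4,5) show ?thesis
    by (simp add: algebra_simps)
qed

text \<open>Both new splits keep the budget that \<open>z\<close> gives to \<open>a\<close> resp. \<open>b\<close> and interpolate between
  \<open>z\<close> and \<open>w\<close> on \<open>A\<close>, with the weight \<open>l = z a / (z a + z b)\<close> chosen so that both stay
  within the unit budget.\<close>

lemma exchange_splits:
  assumes A: "finite A" "A \<subseteq> I" and ab: "a \<in> I" "b \<in> I" "a \<notin> A" "b \<notin> A" "a \<noteq> b"
    and z: "z \<in> budget_splits (insert a (insert b A))" and w: "w \<in> budget_splits A"
  shows "(\<Sum>i\<in>insert a (insert b A). G i (z i)) + (\<Sum>i\<in>A. G i (w i))
    \<le> split_value G (insert a A) + split_value G (insert b A)"
proof -
  define l where "l = (if z a + z b = 0 then 0 else z a / (z a + z b))"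
  define mix where "mix t i = t * z i + (1 - t) * w i" for t i
  have z_ab: "0 \<le> z a" "0 \<le> z b" and z_A: "\<forall>i\<in>A. 0 \<le> z i"
    and z_sum: "z a + z b + (\<Sum>i\<in>A. z i) \<le> 1"
    using z A ab by (auto simp: budget_splits_def)
  have w_A: "\<forall>i\<in>A. 0 \<le> w i" "(\<Sum>i\<in>A. w i) \<le> 1"
    using w by (auto simp: budget_splits_def)
  have l: "0 \<le> l" "l \<le> 1" "l * (z a + z b) = z a"
    using z_ab by (auto simp: l_def divide_simps)
  have mix_nonneg: "\<forall>i\<in>A. 0 \<le> mix t i" if "0 \<le> t" "t \<le> 1" for t
    using that z_A w_A by (simp add: mix_def)
  have mix_sum: "(\<Sum>i\<in>A. mix t i) \<le> t * (1 - z a - z b) + (1 - t)" if "0 \<le> t" "t \<le> 1" for t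
  proof -
    have "t * (\<Sum>i\<in>A. z i) \<le> t * (1 - z a - z b)" "(1 - t) * (\<Sum>i\<in>A. w i) \<le> (1 - t) * 1"
      using that z_sum w_A by (intro mult_left_mono; simp)+
    then show ?thesis
      by (simp add: mix_def sum.distrib sum_distrib_left)
  qed
  have split_a: "(mix l)(a := z a) \<in> budget_splits (insert a A)"
    using mix_nonneg[OF l(1,2)] mix_sum[OF l(1,2)] z_ab l(3)
      sum_insert_fun_upd[OF A(1) ab(3), of "\<lambda>_ x. x" "mix l" "z a"]
    by (simp add: budget_splits_def algebra_simps)
  have split_b: "(mix (1 - l))(b := z b) \<in> budget_splits (insert b A)"
    using mix_nonneg[of "1 - l"] mix_sum[of "1 - l"] l z_ab
      sum_insert_fun_upd[OF A(1) ab(4), of "\<lambda>_ x. x" "mix (1 - l)" "z b"]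
    by (simp add: budget_splits_def algebra_simps)
  have "(\<Sum>i\<in>A. G i (z i)) + (\<Sum>i\<in>A. G i (w i))
      \<le> (\<Sum>i\<in>A. G i (mix l i)) + (\<Sum>i\<in>A. G i (mix (1 - l) i))"
    unfolding sum.distrib[symmetric] mix_def
    using A z_A w_A l by (intro sum_mono) (auto intro!: two_point_exchange)
  also have "\<dots> + G a (z a) + G b (z b)
      = (\<Sum>i\<in>insert a A. G i (((mix l)(a := z a)) i))
        + (\<Sum>i\<in>insert b A. G i (((mix (1 - l))(b := z b)) i))"
    using sum_insert_fun_upd[OF A(1) ab(3), of G "mix l" "z a"]
      sum_insert_fun_upd[OF A(1) ab(4), of G "mix (1 - l)" "z b"]
    by simp
  also have "\<dots> \<le> split_value G (insert a A) + split_value G (insert b A)"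
    using A ab by (intro add_mono split_value_upper split_a split_b) auto
  finally show ?thesis
    using A ab by simp
qed

lemma split_value_submodular:
  assumes "finite I"
  shows "submodular_on I (split_value G)"
  unfolding submodular_on_def
proof (intro allI impI ballI)
  fix A a b assume A: "A \<subseteq> I" and ab: "a \<in> I - A" "b \<in> I - A" "a \<noteq> b"
  have "finite A" using A assms by (rule finite_subset)
  show "split_value G (insert a (insert b A)) + split_value G A
      \<le> split_value G (insert a A) + split_value G (insert b A)"
    unfolding split_value_def[of G "insert a (insert b A)"] split_value_def[of G A]
    by (rule cSup_lincomb_le[where a = 1 and b = 1, simplified])
      (use zero_in_budget_splits ab in \<open>auto intro!: exchange_splits[OF \<open>finite A\<close> A]\<close>)
qed

end

section \<open>The concave functions \<open>g\<^sub>i\<close> and the set function \<open>f\<close>\<close>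

definition obedient_slice ::
    "nat \<Rightarrow> (nat \<Rightarrow> nat \<Rightarrow> real) \<Rightarrow> (nat \<Rightarrow> nat \<Rightarrow> real) \<Rightarrow> real \<Rightarrow> nat \<Rightarrow> real \<Rightarrow> (nat \<Rightarrow> real) \<Rightarrow> bool"
  where
  "obedient_slice m q rho r i z x \<longleftrightarrow>
     (\<forall>j\<in>{1..m}. 0 \<le> x j \<and> x j \<le> q i j) \<and> (\<Sum>j=1..m. x j) \<le> z \<and>
     r * (\<Sum>j=1..m. x j) \<le> (\<Sum>j=1..m. x j * rho i j)"

lemma gfun_eq_Sup:
  "gfun n m q rho xi i z =
     Sup ((\<lambda>x. \<Sum>j=1..m. x j * xi i j) ` Collect (obedient_slice m q rho (rhoE n m q rho) i z))"
  unfolding gfun_def obedient_slice_def by (rule arg_cong[where f = Sup]) auto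

lemma obedient_slice_zero:
  assumes "\<forall>j\<in>{1..m}. 0 \<le> q i j" "0 \<le> z"
  shows "obedient_slice m q rho r i z (\<lambda>_. 0)"
  using assms by (simp add: obedient_slice_def)

lemma sum_mix:
  fixes u v :: real
  shows "(\<Sum>j\<in>J. (u * x j + v * y j) * f j) = u * (\<Sum>j\<in>J. x j * f j) + v * (\<Sum>j\<in>J. y j * f j)"
  by (simp add: distrib_right sum.distrib sum_distrib_left mult.assoc)

lemma obedient_slice_mix:
  assumes x: "obedient_slice m q rho r i z x" and y: "obedient_slice m q rho r i z' y"
    and uv: "0 \<le> u" "0 \<le> v" "u + v = 1"
  shows "obedient_slice m q rho r i (u * z + v * z') (\<lambda>j. u * x j + v * y j)"
proof -
  have "u * x j + v * y j \<le> u * q i j + v * q i j" if "j \<in> {1..m}" for j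
    using x y uv that by (intro add_mono mult_left_mono) (auto simp: obedient_slice_def)
  then have bounds: "\<forall>j\<in>{1..m}. 0 \<le> u * x j + v * y j \<and> u * x j + v * y j \<le> q i j"
    using x y uv by (auto simp: obedient_slice_def distrib_right[symmetric])
  have "(\<Sum>j=1..m. u * x j + v * y j) \<le> u * z + v * z'"
    using sum_mix[of u x v y "\<lambda>_. 1" "{1..m}"] x y uv
    by (simp add: obedient_slice_def add_mono mult_left_mono)
  moreover have "r * (\<Sum>j=1..m. u * x j + v * y j) \<le> (\<Sum>j=1..m. (u * x j + v * y j) * rho i j)"
  proof -
    let ?X = "\<Sum>j=1..m. x j" and ?Y = "\<Sum>j=1..m. y j"
    have "r * (\<Sum>j=1..m. u * x j + v * y j) = u * (r * ?X) + v * (r * ?Y)"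
      using sum_mix[of u x v y "\<lambda>_. 1" "{1..m}"] by (simp add: algebra_simps)
    also have "\<dots> \<le> u * (\<Sum>j=1..m. x j * rho i j) + v * (\<Sum>j=1..m. y j * rho i j)"
      using x y uv by (intro add_mono mult_left_mono) (auto simp: obedient_slice_def)
    also have "\<dots> = (\<Sum>j=1..m. (u * x j + v * y j) * rho i j)"
      by (rule sum_mix[symmetric])
    finally show ?thesis .
  qed
  ultimately show ?thesis
    using bounds by (simp add: obedient_slice_def)
qed

lemma obedient_slice_value_le:
  assumes "obedient_slice m q rho r i z x"
  shows "(\<Sum>j=1..m. x j * xi i j) \<le> (\<Sum>j=1..m. q i j * \<bar>xi i j\<bar>)"
proof (rule sum_mono)
  fix j assume "j \<in> {1..m}"
  then have "0 \<le> x j" "x j \<le> q i j"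
    using assms by (auto simp: obedient_slice_def)
  have "x j * xi i j \<le> x j * \<bar>xi i j\<bar>"
    using \<open>0 \<le> x j\<close> by (simp add: mult_left_mono)
  also have "\<dots> \<le> q i j * \<bar>xi i j\<bar>"
    using \<open>x j \<le> q i j\<close> by (simp add: mult_right_mono)
  finally show "x j * xi i j \<le> q i j * \<bar>xi i j\<bar>" .
qed

lemma gfun_upper:
  assumes "obedient_slice m q rho (rhoE n m q rho) i z x"
  shows "(\<Sum>j=1..m. x j * xi i j) \<le> gfun n m q rho xi i z"
  unfolding gfun_eq_Sup using assms obedient_slice_value_le
  by (intro cSup_upper bdd_aboveI2) auto

lemma gfun_least:
  assumes "\<forall>j\<in>{1..m}. 0 \<le> q i j" "0 \<le> z"
    and "\<And>x. obedient_slice m q rho (rhoE n m q rho) i z x \<Longrightarrow> (\<Sum>j=1..m. x j * xi i j) \<le> c"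
  shows "gfun n m q rho xi i z \<le> c"
  unfolding gfun_eq_Sup using assms obedient_slice_zero
  by (intro cSup_least) blast+

lemma concave_family_gfun:
  assumes q: "\<forall>i\<in>{1..n}. \<forall>j\<in>{1..m}. 0 \<le> q i j"
  shows "concave_family {1..n} (gfun n m q rho xi)"
proof
  fix i assume i: "i \<in> {1..n}"
  have zero: "obedient_slice m q rho (rhoE n m q rho) i z (\<lambda>_. 0)" if "0 \<le> z" for z
    using q i that by (simp add: obedient_slice_zero)
  show "0 \<le> gfun n m q rho xi i z" if "0 \<le> z" for z
    using gfun_upper[OF zero[OF that]] by simp
  show "bdd_above (gfun n m q rho xi i ` {0..})"
    using q i obedient_slice_value_le by (intro bdd_aboveI2 gfun_least) auto
  show "concave_on {0..} (gfun n m q rho xi i)"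
    unfolding concave_on_iff
  proof (intro conjI ballI allI impI)
    fix z z' u v :: real assume zz': "z \<in> {0..}" "z' \<in> {0..}" and uv: "0 \<le> u" "0 \<le> v" "u + v = 1"
    show "u * gfun n m q rho xi i z + v * gfun n m q rho xi i z'
        \<le> gfun n m q rho xi i (u *\<^sub>R z + v *\<^sub>R z')"
      unfolding gfun_eq_Sup[of n m q rho xi i z] gfun_eq_Sup[of n m q rho xi i z']
    proof (rule cSup_lincomb_le)
      fix a b
      assume "a \<in> (\<lambda>x. \<Sum>j=1..m. x j * xi i j) ` Collect (obedient_slice m q rho (rhoE n m q rho) i z)"
        and "b \<in> (\<lambda>x. \<Sum>j=1..m. x j * xi i j) ` Collect (obedient_slice m q rho (rhoE n m q rho) i z')"
      then obtain x y where x: "obedient_slice m q rho (rhoE n m q rho) i z x"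
        and y: "obedient_slice m q rho (rhoE n m q rho) i z' y"
        and ab: "a = (\<Sum>j=1..m. x j * xi i j)" "b = (\<Sum>j=1..m. y j * xi i j)"
        by blast
      have "u * a + v * b = (\<Sum>j=1..m. (u * x j + v * y j) * xi i j)"
        by (simp add: ab sum_mix)
      also have "\<dots> \<le> gfun n m q rho xi i (u * z + v * z')"
        by (intro gfun_upper obedient_slice_mix[OF x y uv])
      finally show "u * a + v * b \<le> gfun n m q rho xi i (u *\<^sub>R z + v *\<^sub>R z')"
        by simp
    qed (use zero zz' uv in auto)
  qed (simp add: convex_real_interval)
qed

lemma ffun_eq_split_value:
  "ffun n m q rho xi S = split_value (gfun n m q rho xi) (insert n S)"
  unfolding ffun_def split_value_def budget_splits_def by (rule arg_cong[where f = Sup]) auto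

section \<open>Marginals of a signaling scheme\<close>

lemma states_mem: "\<theta> \<in> states n m \<Longrightarrow> i \<in> {1..n} \<Longrightarrow> \<theta> i \<in> {1..m}"
  unfolding states_def by (auto simp: PiE_iff)

lemma finite_states: "finite (states n m)"
  unfolding states_def by (auto intro!: finite_PiE)

lemma prior_nonneg:
  assumes "\<forall>i\<in>{1..n}. \<forall>j\<in>{1..m}. 0 \<le> q i j" "\<theta> \<in> states n m"
  shows "0 \<le> prior n q \<theta>"
  unfolding prior_def using assms states_mem by (intro prod_nonneg) blast

lemma sum_prior:
  assumes "\<forall>i\<in>{1..n}. (\<Sum>j=1..m. q i j) = 1"
  shows "(\<Sum>\<theta>\<in>states n m. prior n q \<theta>) = 1"
  unfolding states_def prior_def using assms by (simp flip: prod_sum_PiE)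

lemma sum_prior_type:
  assumes q1: "\<forall>i\<in>{1..n}. (\<Sum>j=1..m. q i j) = 1" and a: "a \<in> {1..n}" and j: "j \<in> {1..m}"
  shows "(\<Sum>\<theta>\<in>states n m. if \<theta> a = j then prior n q \<theta> else 0) = q a j"
proof -
  define B where "B i = (if i = a then {j} else {1..m})" for i
  have fiber: "{\<theta>\<in>states n m. \<theta> a = j} = PiE {1..n} B"
  proof (intro set_eqI iffI)
    fix \<theta> assume "\<theta> \<in> {\<theta>\<in>states n m. \<theta> a = j}"
    then show "\<theta> \<in> PiE {1..n} B" by (auto simp: states_def B_def PiE_iff)
  next
    fix \<theta> assume \<theta>: "\<theta> \<in> PiE {1..n} B"
    have "\<theta> i \<in> {1..m}" if "i \<in> {1..n}" for i
    proof -
      have "\<theta> i \<in> B i" using \<theta> that by (simp add: PiE_iff)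
      with j show ?thesis by (simp add: B_def split: if_splits)
    qed
    moreover have "\<theta> a \<in> B a" using \<theta> a by (simp add: PiE_iff)
    ultimately show "\<theta> \<in> {\<theta>\<in>states n m. \<theta> a = j}"
      using \<theta> by (auto simp: states_def PiE_iff B_def)
  qed
  have "(\<Sum>\<theta>\<in>states n m. if \<theta> a = j then prior n q \<theta> else 0)
      = (\<Sum>\<theta>\<in>{\<theta>\<in>states n m. \<theta> a = j}. prior n q \<theta>)"
    by (simp add: sum.inter_filter finite_states)
  also have "\<dots> = (\<Sum>\<theta>\<in>PiE {1..n} B. prior n q \<theta>)"
    by (simp only: fiber)
  also have "\<dots> = (\<Prod>i\<in>{1..n}. \<Sum>y\<in>B i. q i y)"
    unfolding prior_def by (rule prod_sum_PiE[symmetric]) (auto simp: B_def)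
  also have "\<dots> = (\<Prod>i\<in>{1..n}. if i = a then q a j else 1)"
    using q1 by (intro prod.cong) (auto simp: B_def)
  also have "\<dots> = q a j" using a by (simp add: prod.If_cases)
  finally show ?thesis .
qed

lemma sum_states_by_type:
  assumes "a \<in> {1..n}"
  shows "(\<Sum>\<theta>\<in>states n m. h \<theta> (\<theta> a)) =
    (\<Sum>j=1..m. \<Sum>\<theta>\<in>states n m. if \<theta> a = j then h \<theta> j else (0::real))"
proof -
  have type: "(\<Sum>j=1..m. if \<theta> a = j then h \<theta> j else 0) = h \<theta> (\<theta> a)" if "\<theta> \<in> states n m" for \<theta>
    using states_mem[OF that assms] by (simp add: if_distrib[of "h \<theta>"] cong: if_cong)
  show ?thesis
    by (subst sum.swap) (intro sum.cong refl type[symmetric])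
qed

definition type_mass ::
    "nat \<Rightarrow> nat \<Rightarrow> (nat \<Rightarrow> nat \<Rightarrow> real) \<Rightarrow> ((nat \<Rightarrow> nat) \<Rightarrow> nat \<Rightarrow> real) \<Rightarrow> nat \<Rightarrow> nat \<Rightarrow> nat \<Rightarrow> real"
  where
  "type_mass n m q \<phi> s a j = (\<Sum>\<theta>\<in>states n m. if \<theta> a = j then prior n q \<theta> * \<phi> \<theta> s else 0)"

lemma joint_val_eq_type_mass:
  assumes "a \<in> {1..n}"
  shows "joint_val n m q u \<phi> s a = (\<Sum>j=1..m. type_mass n m q \<phi> s a j * u a j)"
  unfolding joint_val_def type_mass_def sum_distrib_right
  using sum_states_by_type[OF assms, of "\<lambda>\<theta> j. prior n q \<theta> * \<phi> \<theta> s * u a j"]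
  by (simp add: if_distrib[of "\<lambda>x. x * u a _"] cong: if_cong)

lemma sig_prob_eq_type_mass:
  assumes "a \<in> {1..n}"
  shows "sig_prob n m q \<phi> s = (\<Sum>j=1..m. type_mass n m q \<phi> s a j)"
  unfolding sig_prob_def type_mass_def
  using sum_states_by_type[OF assms, of "\<lambda>\<theta> _. prior n q \<theta> * \<phi> \<theta> s"] by simp

lemma type_mass_nonneg:
  assumes "\<forall>i\<in>{1..n}. \<forall>j\<in>{1..m}. 0 \<le> q i j" "is_scheme n m k \<phi>" "s \<in> {1..k}"
  shows "0 \<le> type_mass n m q \<phi> s a j"
  unfolding type_mass_def using assms prior_nonneg[OF assms(1)]
  by (intro sum_nonneg) (auto simp: is_scheme_def)

lemma sig_prob_nonneg:
  assumes "\<forall>i\<in>{1..n}. \<forall>j\<in>{1..m}. 0 \<le> q i j" "is_scheme n m k \<phi>" "s \<in> {1..k}"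
  shows "0 \<le> sig_prob n m q \<phi> s"
  unfolding sig_prob_def using assms prior_nonneg[OF assms(1)]
  by (intro sum_nonneg) (auto simp: is_scheme_def)

lemma sum_type_mass_signals:
  assumes q1: "\<forall>i\<in>{1..n}. (\<Sum>j=1..m. q i j) = 1" and \<phi>: "is_scheme n m k \<phi>"
    and "a \<in> {1..n}" "j \<in> {1..m}"
  shows "(\<Sum>s=1..k. type_mass n m q \<phi> s a j) = q a j"
proof -
  have "(\<Sum>s=1..k. type_mass n m q \<phi> s a j)
      = (\<Sum>\<theta>\<in>states n m. if \<theta> a = j then prior n q \<theta> * (\<Sum>s=1..k. \<phi> \<theta> s) else 0)"
    unfolding type_mass_def by (subst sum.swap) (auto intro!: sum.cong simp: sum_distrib_left)
  also have "\<dots> = (\<Sum>\<theta>\<in>states n m. if \<theta> a = j then prior n q \<theta> else 0)"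
    using \<phi> by (intro sum.cong) (auto simp: is_scheme_def)
  also have "\<dots> = q a j"
    using assms by (intro sum_prior_type)
  finally show ?thesis .
qed

lemma sum_sig_prob:
  assumes "\<forall>i\<in>{1..n}. (\<Sum>j=1..m. q i j) = 1" "is_scheme n m k \<phi>"
  shows "(\<Sum>s=1..k. sig_prob n m q \<phi> s) = 1"
proof -
  have "(\<Sum>s=1..k. sig_prob n m q \<phi> s) = (\<Sum>\<theta>\<in>states n m. prior n q \<theta> * (\<Sum>s=1..k. \<phi> \<theta> s))"
    unfolding sig_prob_def by (subst sum.swap) (simp add: sum_distrib_left)
  also have "\<dots> = (\<Sum>\<theta>\<in>states n m. prior n q \<theta>)"
    using assms(2) by (intro sum.cong) (auto simp: is_scheme_def)
  finally show ?thesis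
    using sum_prior[OF assms(1)] by simp
qed

section \<open>Optimal schemes are dominated by \<open>f\<close>\<close>

lemma sender_preferred_best_response:
  assumes "1 \<le> n"
  shows "\<exists>a\<in>best_responses n m q rho \<phi> s.
    joint_val n m q xi \<phi> s a = Max (joint_val n m q xi \<phi> s ` best_responses n m q rho \<phi> s)"
proof -
  let ?BR = "best_responses n m q rho \<phi> s" and ?JR = "joint_val n m q rho \<phi> s"
  have "finite ?BR" by (simp add: best_responses_def)
  have "Max (?JR ` {1..n}) \<in> ?JR ` {1..n}"
    using assms by (intro Max_in) auto
  then obtain a where "a \<in> {1..n}" "?JR a = Max (?JR ` {1..n})" by auto
  then have "a \<in> ?BR" by (auto simp: best_responses_def)
  then have "Max (joint_val n m q xi \<phi> s ` ?BR) \<in> joint_val n m q xi \<phi> s ` ?BR"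
    using \<open>finite ?BR\<close> by (intro Max_in) auto
  then show ?thesis by auto
qed

lemma best_response_obedient:
  assumes q: "\<forall>i\<in>{1..n}. \<forall>j\<in>{1..m}. 0 \<le> q i j" and \<phi>: "is_scheme n m k \<phi>"
    and s: "s \<in> {1..k}" and a: "a \<in> best_responses n m q rho \<phi> s"
    and obedient: "0 < sig_prob n m q \<phi> s \<Longrightarrow> rhoE n m q rho \<le> receiver_cond_util n m q rho \<phi> s"
  shows "rhoE n m q rho * (\<Sum>j=1..m. type_mass n m q \<phi> s a j)
    \<le> (\<Sum>j=1..m. type_mass n m q \<phi> s a j * rho a j)"
proof -
  have "a \<in> {1..n}" using a by (simp add: best_responses_def)
  have nonneg: "\<forall>j\<in>{1..m}. 0 \<le> type_mass n m q \<phi> s a j"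
    using type_mass_nonneg[OF q \<phi> s] by blast
  have max_value: "Max (joint_val n m q rho \<phi> s ` {1..n}) = (\<Sum>j=1..m. type_mass n m q \<phi> s a j * rho a j)"
  proof -
    have "Max (joint_val n m q rho \<phi> s ` {1..n}) = joint_val n m q rho \<phi> s a"
      using a by (intro Max_eqI) (auto simp: best_responses_def)
    then show ?thesis
      using joint_val_eq_type_mass[OF \<open>a \<in> {1..n}\<close>] by simp
  qed
  show ?thesis
  proof (cases "0 < sig_prob n m q \<phi> s")
    case True
    then show ?thesis
      using obedient max_value sig_prob_eq_type_mass[OF \<open>a \<in> {1..n}\<close>]
      by (simp add: receiver_cond_util_def le_divide_eq)
  next
    case False
    moreover have "0 \<le> (\<Sum>j=1..m. type_mass n m q \<phi> s a j)"
      using nonneg by (auto intro: sum_nonneg)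
    ultimately have "(\<Sum>j=1..m. type_mass n m q \<phi> s a j) = 0"
      using sig_prob_eq_type_mass[OF \<open>a \<in> {1..n}\<close>] by simp
    then have "\<forall>j\<in>{1..m}. type_mass n m q \<phi> s a j = 0"
      using nonneg sum_nonneg_eq_0_iff by (metis finite_atLeastAtMost)
    then show ?thesis by simp
  qed
qed

lemma pooled_slice_obedient:
  assumes q: "\<forall>i\<in>{1..n}. \<forall>j\<in>{1..m}. 0 \<le> q i j" and q1: "\<forall>i\<in>{1..n}. (\<Sum>j=1..m. q i j) = 1"
    and \<phi>: "is_scheme n m k \<phi>"
    and obedient: "\<forall>s\<in>{1..k}. 0 < sig_prob n m q \<phi> s \<longrightarrow>
      rhoE n m q rho \<le> receiver_cond_util n m q rho \<phi> s"
    and act: "\<And>s. act s \<in> best_responses n m q rho \<phi> s" and b: "b \<in> {1..n}"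
  defines "R \<equiv> {s\<in>{1..k}. act s = b}"
  shows "obedient_slice m q rho (rhoE n m q rho) b (\<Sum>s\<in>R. sig_prob n m q \<phi> s)
    (\<lambda>j. \<Sum>s\<in>R. type_mass n m q \<phi> s b j)"
  unfolding obedient_slice_def
proof (intro conjI ballI)
  fix j assume j: "j \<in> {1..m}"
  have nonneg: "\<forall>s\<in>{1..k}. 0 \<le> type_mass n m q \<phi> s b j"
    using type_mass_nonneg[OF q \<phi>] by blast
  then show "0 \<le> (\<Sum>s\<in>R. type_mass n m q \<phi> s b j)"
    by (auto simp: R_def intro: sum_nonneg)
  have "(\<Sum>s\<in>R. type_mass n m q \<phi> s b j) \<le> (\<Sum>s=1..k. type_mass n m q \<phi> s b j)"
    using nonneg by (intro sum_mono2) (auto simp: R_def)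
  also have "\<dots> = q b j"
    using sum_type_mass_signals[OF q1 \<phi> b j] .
  finally show "(\<Sum>s\<in>R. type_mass n m q \<phi> s b j) \<le> q b j" .
next
  show "(\<Sum>j=1..m. \<Sum>s\<in>R. type_mass n m q \<phi> s b j) \<le> (\<Sum>s\<in>R. sig_prob n m q \<phi> s)"
    by (subst sum.swap) (simp add: sig_prob_eq_type_mass[OF b])
  have "rhoE n m q rho * (\<Sum>j=1..m. \<Sum>s\<in>R. type_mass n m q \<phi> s b j)
      = (\<Sum>s\<in>R. rhoE n m q rho * (\<Sum>j=1..m. type_mass n m q \<phi> s b j))"
    by (subst sum.swap) (simp add: sum_distrib_left)
  also have "\<dots> \<le> (\<Sum>s\<in>R. \<Sum>j=1..m. type_mass n m q \<phi> s b j * rho b j)"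
    using act obedient by (intro sum_mono best_response_obedient[OF q \<phi>]) (auto simp: R_def)
  also have "\<dots> = (\<Sum>j=1..m. (\<Sum>s\<in>R. type_mass n m q \<phi> s b j) * rho b j)"
    by (subst sum.swap) (simp add: sum_distrib_right)
  finally show "rhoE n m q rho * (\<Sum>j=1..m. \<Sum>s\<in>R. type_mass n m q \<phi> s b j)
      \<le> (\<Sum>j=1..m. (\<Sum>s\<in>R. type_mass n m q \<phi> s b j) * rho b j)" .
qed

lemma recommended_value_le_split_value:
  assumes q: "\<forall>i\<in>{1..n}. \<forall>j\<in>{1..m}. 0 \<le> q i j" and q1: "\<forall>i\<in>{1..n}. (\<Sum>j=1..m. q i j) = 1"
    and n: "1 \<le> n" and \<phi>: "is_scheme n m k \<phi>"
    and obedient: "\<forall>s\<in>{1..k}. 0 < sig_prob n m q \<phi> s \<longrightarrow>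
      rhoE n m q rho \<le> receiver_cond_util n m q rho \<phi> s"
    and act: "\<And>s. act s \<in> best_responses n m q rho \<phi> s"
  shows "(\<Sum>s=1..k. joint_val n m q xi \<phi> s (act s))
    \<le> split_value (gfun n m q rho xi) (insert n (act ` {1..k}))"
proof -
  define P where "P = insert n (act ` {1..k})"
  define R where "R b = {s\<in>{1..k}. act s = b}" for b
  define mass where "mass b = (\<Sum>s\<in>R b. sig_prob n m q \<phi> s)" for b
  let ?G = "gfun n m q rho xi"
  interpret concave_family "{1..n}" ?G
    using q by (rule concave_family_gfun)
  have P: "finite P" "P \<subseteq> {1..n}" "act ` {1..k} \<subseteq> P"
    using n act by (auto simp: P_def best_responses_def)
  have "(\<Sum>s=1..k. joint_val n m q xi \<phi> s (act s)) = (\<Sum>b\<in>P. \<Sum>s\<in>R b. joint_val n m q xi \<phi> s b)"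
    unfolding R_def using P by (subst sum.group[symmetric]) auto
  also have "\<dots> = (\<Sum>b\<in>P. \<Sum>j=1..m. (\<Sum>s\<in>R b. type_mass n m q \<phi> s b j) * xi b j)"
  proof (rule sum.cong[OF refl])
    fix b assume "b \<in> P"
    with P have "b \<in> {1..n}" by auto
    then show "(\<Sum>s\<in>R b. joint_val n m q xi \<phi> s b)
        = (\<Sum>j=1..m. (\<Sum>s\<in>R b. type_mass n m q \<phi> s b j) * xi b j)"
      by (simp add: joint_val_eq_type_mass sum_distrib_right sum.swap[of _ "R b"])
  qed
  also have "\<dots> \<le> (\<Sum>b\<in>P. ?G b (mass b))"
    using P unfolding mass_def R_def
    by (intro sum_mono gfun_upper pooled_slice_obedient[OF q q1 \<phi> obedient act]) auto
  also have "\<dots> \<le> split_value ?G P"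
  proof (intro split_value_upper P)
    have "(\<Sum>b\<in>P. mass b) = (\<Sum>s=1..k. sig_prob n m q \<phi> s)"
      unfolding mass_def R_def using P by (subst sum.group) auto
    moreover have "0 \<le> mass b" for b
      unfolding mass_def R_def using sig_prob_nonneg[OF q \<phi>] by (auto intro: sum_nonneg)
    ultimately show "mass \<in> budget_splits P"
      using sum_sig_prob[OF q1 \<phi>] by (simp add: budget_splits_def)
  qed
  finally show ?thesis
    by (simp add: P_def)
qed

lemma sender_util_le_ffun:
  assumes q: "\<forall>i\<in>{1..n}. \<forall>j\<in>{1..m}. 0 \<le> q i j" and q1: "\<forall>i\<in>{1..n}. (\<Sum>j=1..m. q i j) = 1"
    and n: "1 \<le> n" and \<phi>: "is_scheme n m k \<phi>"
    and obedient: "\<forall>s\<in>{1..k}. 0 < sig_prob n m q \<phi> s \<longrightarrow>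
      rhoE n m q rho \<le> receiver_cond_util n m q rho \<phi> s"
  shows "\<exists>T\<subseteq>{1..n-1}. card T \<le> k \<and> sender_util n m k q rho xi \<phi> \<le> ffun n m q rho xi T"
proof -
  have "\<forall>s. \<exists>a. a \<in> best_responses n m q rho \<phi> s \<and>
      joint_val n m q xi \<phi> s a = Max (joint_val n m q xi \<phi> s ` best_responses n m q rho \<phi> s)"
    using sender_preferred_best_response[OF n] by blast
  then obtain act where act: "\<And>s. act s \<in> best_responses n m q rho \<phi> s"
    "\<And>s. joint_val n m q xi \<phi> s (act s)
       = Max (joint_val n m q xi \<phi> s ` best_responses n m q rho \<phi> s)"
    by metis
  define T where "T = act ` {1..k} - {n}"
  have act_range: "act ` {1..k} \<subseteq> {1..n}"
    using act(1) by (auto simp: best_responses_def)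
  have "sender_util n m k q rho xi \<phi> = (\<Sum>s=1..k. joint_val n m q xi \<phi> s (act s))"
    by (simp add: sender_util_def act(2))
  also have "\<dots> \<le> ffun n m q rho xi T"
    using recommended_value_le_split_value[OF q q1 n \<phi> obedient act(1)]
    by (simp add: T_def ffun_eq_split_value)
  moreover have "card T \<le> k"
    using card_image_le[of "{1..k}" act] card_Diff1_le[of "act ` {1..k}" n] by (simp add: T_def)
  moreover have "T \<subseteq> {1..n-1}"
    using act_range by (auto simp: T_def)
  ultimately show ?thesis by auto
qed

lemma ffun_monotone_submodular:
  assumes q: "\<forall>i\<in>{1..n}. \<forall>j\<in>{1..m}. 0 \<le> q i j" and n: "1 \<le> n"
  shows "mono_on (Pow {1..n-1}) (ffun n m q rho xi)"
    and "submodular_on {1..n-1} (ffun n m q rho xi)"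
    and "0 \<le> ffun n m q rho xi {}"
proof -
  interpret concave_family "{1..n}" "gfun n m q rho xi"
    using q by (rule concave_family_gfun)
  have ffun: "ffun n m q rho xi = (\<lambda>S. split_value (gfun n m q rho xi) (insert n S))"
    by (simp add: fun_eq_iff ffun_eq_split_value)
  have U: "{1..n-1} = {1..n} - {n}" and "n \<in> {1..n}"
    using n by auto
  show "mono_on (Pow {1..n-1}) (ffun n m q rho xi)"
    unfolding ffun U using \<open>n \<in> {1..n}\<close> by (intro mono_on_insert_shift split_value_mono) auto
  show "submodular_on {1..n-1} (ffun n m q rho xi)"
    unfolding ffun U using \<open>n \<in> {1..n}\<close> by (intro submodular_on_insert_shift split_value_submodular) auto
  show "0 \<le> ffun n m q rho xi {}"
    unfolding ffun using \<open>n \<in> {1..n}\<close> by (intro split_value_nonneg) auto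
qed

lemma greedy_run_iff_greedy_sequence:
  "greedy_run n m k q rho xi xs \<longleftrightarrow>
     length xs = k - 1 \<and> greedy_sequence {1..n-1} (ffun n m q rho xi) xs"
  unfolding greedy_run_def greedy_sequence_def greedy_choice_def
  by (rule conj_cong[OF refl]) simp

lemma optimal_schemes_same_util:
  assumes "optimal_scheme n m k q rho xi \<phi>" "optimal_scheme n m k q rho xi \<psi>"
  shows "sender_util n m k q rho xi \<phi> = sender_util n m k q rho xi \<psi>"
  using assms unfolding optimal_scheme_def by (simp add: order_antisym)

theorem lemma4p4:
  fixes n m k :: nat and q rho xi :: "nat \<Rightarrow> nat \<Rightarrow> real"
    and \<phi>star :: "(nat \<Rightarrow> nat) \<Rightarrow> nat \<Rightarrow> real"
  assumes "2 \<le> k" and "k \<le> n"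
    and "\<forall>i\<in>{1..n}. \<forall>j\<in>{1..m}. 0 \<le> q i j"
    and "\<forall>i\<in>{1..n}. (\<Sum>j=1..m. q i j) = 1"
    and "(\<Sum>j=1..m. q n j * rho n j) = rhoE n m q rho"
    and "\<forall>i\<in>{1..n}. (\<Sum>j=1..m. q i j * rho i j) = rhoE n m q rho \<longrightarrow>
            (\<Sum>j=1..m. q i j * xi i j) \<le> (\<Sum>j=1..m. q n j * xi n j)"
    and "rhoE_optimal n m k q rho xi"
    and "optimal_scheme n m k q rho xi \<phi>star"
  shows "(\<exists>xs. greedy_run n m k q rho xi xs) \<and>
         (\<forall>xs. greedy_run n m k q rho xi xs \<longrightarrow>
            set xs \<subseteq> {1..n-1} \<and> card (set xs) = k - 1 \<and>
            ffun n m q rho xi (set xs)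
              \<ge> (1 - (1 - 1 / real k) ^ (k - 1)) * sender_util n m k q rho xi \<phi>star)"
proof (intro conjI allI impI)
  have n: "1 \<le> n" using assms(1,2) by simp
  show "\<exists>xs. greedy_run n m k q rho xi xs"
    using greedy_sequence_exists[of "{1..n-1}" "k - 1"] assms(2)
    by (auto simp: greedy_run_iff_greedy_sequence)
  fix xs assume "greedy_run n m k q rho xi xs"
  then have xs: "length xs = k - 1" "greedy_sequence {1..n-1} (ffun n m q rho xi) xs"
    by (simp_all add: greedy_run_iff_greedy_sequence)
  show "set xs \<subseteq> {1..n-1}" "card (set xs) = k - 1"
    using greedy_sequence_distinct[OF xs(2)] xs(1) by (simp_all add: distinct_card)
  obtain \<phi> where \<phi>: "optimal_scheme n m k q rho xi \<phi>"
    "\<forall>s\<in>{1..k}. 0 < sig_prob n m q \<phi> s \<longrightarrow> rhoE n m q rho \<le> receiver_cond_util n m q rho \<phi> s"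
    using assms(7) unfolding rhoE_optimal_def by blast
  have "is_scheme n m k \<phi>"
    using \<phi>(1) by (simp add: optimal_scheme_def)
  from sender_util_le_ffun[OF assms(3,4) n this \<phi>(2)]
  obtain T where T: "T \<subseteq> {1..n-1}" "card T \<le> k"
    "sender_util n m k q rho xi \<phi> \<le> ffun n m q rho xi T"
    by blast
  have "(1 - (1 - 1 / real k) ^ (k - 1)) * sender_util n m k q rho xi \<phi>star
      \<le> (1 - (1 - 1 / real k) ^ (k - 1)) * ffun n m q rho xi T"
    using T(3) optimal_schemes_same_util[OF assms(8) \<phi>(1)] assms(1)
    by (intro mult_left_mono) (auto simp: power_le_one)
  also have "\<dots> \<le> ffun n m q rho xi (set xs)"
    using greedy_sequence_approximation[OF _ ffun_monotone_submodular[OF assms(3) n] xs(2) T(1,2)]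
      xs(1) assms(1) by simp
  finally show "(1 - (1 - 1 / real k) ^ (k - 1)) * sender_util n m k q rho xi \<phi>star
      \<le> ffun n m q rho xi (set xs)" .
qed

end
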